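(* Let $X,Y,Z$ be topological spaces and $f:X\times Y\to Z$ a mapping. Let $\tau_f$ be the topology on $X\times Y$ generated by $f$ and the two projections $X\times Y\to X$, $X\times Y\to Y$ (the coarsest topology making these three maps continuous). Then the set $Q$ of all $(x,y)\in X\times Y$ at which $f$ is lower $X$-quasicontinuous is closed in $(X\times Y,\tau_f)$.
   Context: $f$ is lower $X$-quasicontinuous at $(a,b)$ if for each neighborhood $U$ of $a$ in $X$, each neighborhood $V$ of $b$ in $Y$, and each neighborhood $W$ of $f(a,b)$ in $Z$, there is an open set $O\subset X$ with $\emptyset\neq O\subset U$ and $f(\{x\}\times V)\cap W\neq\emptyset$ for every $x\in O$. *)

theory Defs
  imports "HOL-Analysis.Analysis"
begin

definition tau_f :: "'a topology \<Rightarrow> 'b topology \<Rightarrow> 'c topology \<Rightarrow> ('a \<times> 'b \<Rightarrow> 'c) \<Rightarrow> ('a \<times> 'b) topology" where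
  "tau_f X Y Z f = topology_generated_by
     ({{p \<in> topspace X \<times> topspace Y. fst p \<in> U} | U. openin X U}
      \<union> {{p \<in> topspace X \<times> topspace Y. snd p \<in> V} | V. openin Y V}
      \<union> {{p \<in> topspace X \<times> topspace Y. f p \<in> W} | W. openin Z W})"

definition lower_X_quasicontinuous_at ::
  "'a topology \<Rightarrow> 'b topology \<Rightarrow> 'c topology \<Rightarrow> ('a \<times> 'b \<Rightarrow> 'c) \<Rightarrow> 'a \<Rightarrow> 'b \<Rightarrow> bool" where
  "lower_X_quasicontinuous_at X Y Z f a b \<longleftrightarrow>
     (\<forall>U V W. openin X U \<longrightarrow> a \<in> U \<longrightarrow> openin Y V \<longrightarrow> b \<in> V \<longrightarrow>
        openin Z W \<longrightarrow> f (a, b) \<in> W \<longrightarrow>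
        (\<exists>G. openin X G \<and> G \<noteq> {} \<and> G \<subseteq> U \<and>
             (\<forall>x\<in>G. f ` ({x} \<times> V) \<inter> W \<noteq> {})))"

end

theory Submission
  imports Defs
begin

(* Lower X-quasicontinuity of f at (a,b) fails exactly when there
   are open sets U \<ni> a, V \<ni> b, W \<ni> f(a,b) such that no nonempty open G \<subseteq> U
   has f({x} \<times> V) meeting W for every x \<in> G.  Call such a triple (U,V,W) a
   quasicontinuity obstruction; the condition on it does not mention (a,b).
   Hence an obstruction (U,V,W) witnesses failure at every point of the box
   {p. fst p \<in> U, snd p \<in> V, f p \<in> W}, and the set of failure points is the
   union of these boxes.  Each box is a finite intersection of subbasic sets
   of tau_f, so it is tau_f-open; thus the complement of Q is open and Q is
   closed. *)

text \<open>The carrier of \<open>tau_f\<close> is the full product \<open>topspace X \<times> topspace Y\<close>: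
  the preimage of \<open>topspace X\<close> under \<open>fst\<close> is itself a subbasic set.\<close>

lemma topspace_tau_f:
  "topspace (tau_f X Y Z f) = topspace X \<times> topspace Y"
proof -
  let ?S = "{{p \<in> topspace X \<times> topspace Y. fst p \<in> U} | U. openin X U}
      \<union> {{p \<in> topspace X \<times> topspace Y. snd p \<in> V} | V. openin Y V}
      \<union> {{p \<in> topspace X \<times> topspace Y. f p \<in> W} | W. openin Z W}"
  have "topspace X \<times> topspace Y \<in> ?S"
    by (rule UnI1, rule UnI1) (auto intro: exI[of _ "topspace X"])
  moreover have "\<Union>?S \<subseteq> topspace X \<times> topspace Y"
    by auto
  ultimately show ?thesis
    unfolding tau_f_def topology_generated_by_topspace by blast
qed

definition tau_f_box ::
  "'a topology \<Rightarrow> 'b topology \<Rightarrow> ('a \<times> 'b \<Rightarrow> 'c) \<Rightarrow> 'a set \<Rightarrow> 'b set \<Rightarrow> 'c set \<Rightarrow> ('a \<times> 'b) set"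
  where "tau_f_box X Y f U V W =
    {p \<in> topspace X \<times> topspace Y. fst p \<in> U \<and> snd p \<in> V \<and> f p \<in> W}"

lemma openin_tau_f_box:
  assumes "openin X U" "openin Y V" "openin Z W"
  shows "openin (tau_f X Y Z f) (tau_f_box X Y f U V W)"
proof -
  let ?P = "\<lambda>P. {p \<in> topspace X \<times> topspace Y. P p}"
  have box: "tau_f_box X Y f U V W =
      ?P (\<lambda>p. fst p \<in> U) \<inter> ?P (\<lambda>p. snd p \<in> V) \<inter> ?P (\<lambda>p. f p \<in> W)"
    unfolding tau_f_box_def by auto
  show ?thesis
    unfolding box tau_f_def openin_topology_generated_by_iff
    using assms by (intro generate_topology_on.Int generate_topology_on.Basis) blast+
qed

text \<open>A triple of open sets for which the conclusion of lower
  quasicontinuity fails; note that it does not depend on a base point.\<close>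

definition quasicontinuity_obstruction ::
  "'a topology \<Rightarrow> 'b topology \<Rightarrow> 'c topology \<Rightarrow> ('a \<times> 'b \<Rightarrow> 'c) \<Rightarrow> 'a set \<Rightarrow> 'b set \<Rightarrow> 'c set \<Rightarrow> bool"
  where "quasicontinuity_obstruction X Y Z f U V W \<longleftrightarrow>
    openin X U \<and> openin Y V \<and> openin Z W \<and>
    \<not> (\<exists>G. openin X G \<and> G \<noteq> {} \<and> G \<subseteq> U \<and> (\<forall>x\<in>G. f ` ({x} \<times> V) \<inter> W \<noteq> {}))"

lemma not_lower_X_quasicontinuous_iff:
  "\<not> lower_X_quasicontinuous_at X Y Z f a b \<longleftrightarrow>
   (\<exists>U V W. quasicontinuity_obstruction X Y Z f U V W \<and> a \<in> U \<and> b \<in> V \<and> f (a, b) \<in> W)"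
  unfolding lower_X_quasicontinuous_at_def quasicontinuity_obstruction_def by blast

lemma failure_set_eq_Union_boxes:
  "topspace X \<times> topspace Y -
     {p \<in> topspace X \<times> topspace Y. lower_X_quasicontinuous_at X Y Z f (fst p) (snd p)} =
   \<Union> {tau_f_box X Y f U V W | U V W. quasicontinuity_obstruction X Y Z f U V W}"
    (is "?F = ?B")
proof (rule set_eqI)
  fix p :: "'a \<times> 'b"
  obtain a b where p: "p = (a, b)"
    by fastforce
  have "p \<in> ?F \<longleftrightarrow> (a, b) \<in> topspace X \<times> topspace Y \<and>
      (\<exists>U V W. quasicontinuity_obstruction X Y Z f U V W \<and> a \<in> U \<and> b \<in> V \<and> f (a, b) \<in> W)"
    unfolding p not_lower_X_quasicontinuous_iff [symmetric] by auto
  also have "\<dots> \<longleftrightarrow>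
      (\<exists>U V W. quasicontinuity_obstruction X Y Z f U V W \<and> p \<in> tau_f_box X Y f U V W)"
    unfolding p tau_f_box_def by auto
  also have "\<dots> \<longleftrightarrow> p \<in> ?B"
    by blast
  finally show "p \<in> ?F \<longleftrightarrow> p \<in> ?B" .
qed

theorem mainTheorem5:
  fixes X :: "'a topology" and Y :: "'b topology" and Z :: "'c topology"
    and f :: "'a \<times> 'b \<Rightarrow> 'c"
  assumes "f \<in> topspace X \<times> topspace Y \<rightarrow> topspace Z"
  shows "closedin (tau_f X Y Z f)
           {p \<in> topspace X \<times> topspace Y. lower_X_quasicontinuous_at X Y Z f (fst p) (snd p)}"
proof -
  let ?Q = "{p \<in> topspace X \<times> topspace Y. lower_X_quasicontinuous_at X Y Z f (fst p) (snd p)}"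
  have "openin (tau_f X Y Z f)
      (\<Union> {tau_f_box X Y f U V W | U V W. quasicontinuity_obstruction X Y Z f U V W})"
    by (rule openin_Union)
       (auto simp: quasicontinuity_obstruction_def intro: openin_tau_f_box)
  then have "openin (tau_f X Y Z f) (topspace X \<times> topspace Y - ?Q)"
    by (simp only: failure_set_eq_Union_boxes)
  then show ?thesis
    unfolding closedin_def topspace_tau_f by auto
qed

end
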